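(* Let $D$ and $X$ be finite sets and $w \colon \overline{D^X}\to\mathbb{R}$ a $(D,X)$-ranking function. Then $w$ is subset-monotone if and only if the following holds: for all partial assignments $\tau_1,\tau_2,\sigma_1,\sigma_2$ such that $\tau_i$ is disjoint from $\sigma_i$ for each $i\in\{1,2\}$, if $w(\tau_1)\le w(\tau_2)$ and $w(\sigma_1)\le w(\sigma_2)$, then $w(\tau_1\times\sigma_1)\le w(\tau_2\times\sigma_2)$.
   Context: A partial assignment on domain $D$ and variables $Y \subseteq X$ is a map $Y \to D\cup\{\bot\}$ ($\bot$ = undefined); $\overline{D^Y}$ is the set of these. Two partial assignments $\tau\in\overline{D^Y}$, $\sigma\in\overline{D^Z}$ are disjoint if $Y\cap Z=\emptyset$, and then $\tau\times\sigma\in\overline{D^{Y\cup Z}}$ agrees with $\tau$ on $Y$ and $\sigma$ on $Z$. A $(D,X)$-ranking function is any function $w\colon\overline{D^X}\to\mathbb{R}$; for $\tau \in \overline{D^Y}$ with $Y\subseteq X$, $w(\tau)$ denotes $w$ of the extension of $\tau$ assigning $\bot$ to all variables in $X\setminus Y$. $w$ is subset-monotone if for every $Y\subseteq X$, all $\tau_1,\tau_2\in\overline{D^Y}$ with $w(\tau_1)\le w(\tau_2)$, and all $\sigma\in\overline{D^{X\setminus Y}}$, we have $w(\sigma\times\tau_1)\le w(\sigma\times\tau_2)$. In the stated condition, $\tau_1,\tau_2$ (resp.\ $\sigma_1, \sigma_2$) are understood to range over partial assignments on a common variable set $Y$ (resp.\ $Z$) with $Y \cap Z = \emptyset$ and $Y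 \cup Z \subseteq X$. *)

theory Defs
  imports Complex_Main
begin

text \<open>A partial assignment on domain D and variable set Y is represented by a
function of type 'x => 'd option (None = undefined, the bottom value) that takes
values in D or None on Y and is None outside Y. Thus its extension by bottom to
any superset of Y is the function itself.\<close>

definition partial_assignments :: "'d set \<Rightarrow> 'x set \<Rightarrow> ('x \<Rightarrow> 'd option) set" where
  "partial_assignments D Y =
     {f. (\<forall>x\<in>Y. f x = None \<or> (\<exists>d\<in>D. f x = Some d)) \<and> (\<forall>x. x \<notin> Y \<longrightarrow> f x = None)}"

definition pa_prod :: "'x set \<Rightarrow> ('x \<Rightarrow> 'd option) \<Rightarrow> ('x \<Rightarrow> 'd option) \<Rightarrow> ('x \<Rightarrow> 'd option)" where
  "pa_prod Y \<tau> \<sigma> = (\<lambda>x. if x \<in> Y then \<tau> x else \<sigma> x)"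

text \<open>A (D,X)-ranking function is w :: ('x => 'd option) => real; only its values on
partial_assignments D X matter.\<close>

definition subset_monotone :: "'d set \<Rightarrow> 'x set \<Rightarrow> (('x \<Rightarrow> 'd option) \<Rightarrow> real) \<Rightarrow> bool" where
  "subset_monotone D X w \<longleftrightarrow>
     (\<forall>Y. Y \<subseteq> X \<longrightarrow>
       (\<forall>\<tau>1\<in>partial_assignments D Y. \<forall>\<tau>2\<in>partial_assignments D Y.
          w \<tau>1 \<le> w \<tau>2 \<longrightarrow>
          (\<forall>\<sigma>\<in>partial_assignments D (X - Y).
             w (pa_prod (X - Y) \<sigma> \<tau>1) \<le> w (pa_prod (X - Y) \<sigma> \<tau>2))))"

end

theory Submission
  imports Defs
begin

text \<open>Subset-monotonicity changes one factor of a product whose other factor lives on the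
complement of its variables. Since a partial assignment on a set of variables also is one on
every superset, the other factor may live on any disjoint set of variables. Changing the two
factors one after the other, passing through \<open>\<tau>1 \<times> \<sigma>2\<close>, gives one direction; the
other is the special case \<open>\<sigma>1 = \<sigma>2\<close> on the complement.\<close>

lemma partial_assignments_mono:
  "\<tau> \<in> partial_assignments D Y \<Longrightarrow> Y \<subseteq> A \<Longrightarrow> \<tau> \<in> partial_assignments D A"
  unfolding partial_assignments_def by blast

lemma partial_assignments_outside:
  "\<tau> \<in> partial_assignments D Y \<Longrightarrow> x \<notin> Y \<Longrightarrow> \<tau> x = None"
  unfolding partial_assignments_def by blast

lemma pa_prod_enlarge:
  assumes "\<tau> \<in> partial_assignments D Y" "\<sigma> \<in> partial_assignments D Z"
    and "Y \<subseteq> A" "A \<inter> Z = {}"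
  shows "pa_prod A \<tau> \<sigma> = pa_prod Y \<tau> \<sigma>"
  using assms partial_assignments_outside[OF assms(1)] partial_assignments_outside[OF assms(2)]
  unfolding pa_prod_def by fastforce

lemma pa_prod_commute:
  assumes "\<tau> \<in> partial_assignments D Y" "\<sigma> \<in> partial_assignments D Z" "Y \<inter> Z = {}"
  shows "pa_prod Z \<sigma> \<tau> = pa_prod Y \<tau> \<sigma>"
  using assms partial_assignments_outside[OF assms(1)] partial_assignments_outside[OF assms(2)]
  unfolding pa_prod_def by fastforce

lemma subset_monotoneD:
  assumes "subset_monotone D X w" "Y \<subseteq> X"
    and "\<tau>1 \<in> partial_assignments D Y" "\<tau>2 \<in> partial_assignments D Y" "w \<tau>1 \<le> w \<tau>2"
    and "\<sigma> \<in> partial_assignments D (X - Y)"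
  shows "w (pa_prod (X - Y) \<sigma> \<tau>1) \<le> w (pa_prod (X - Y) \<sigma> \<tau>2)"
  using assms unfolding subset_monotone_def by blast

lemma subset_monotone_pa_prod_right:
  assumes sm: "subset_monotone D X w" and disj: "Y \<inter> Z = {}" "Y \<union> Z \<subseteq> X"
    and \<tau>: "\<tau> \<in> partial_assignments D Y"
    and \<sigma>: "\<sigma>1 \<in> partial_assignments D Z" "\<sigma>2 \<in> partial_assignments D Z" "w \<sigma>1 \<le> w \<sigma>2"
  shows "w (pa_prod Y \<tau> \<sigma>1) \<le> w (pa_prod Y \<tau> \<sigma>2)"
proof -
  have "\<tau> \<in> partial_assignments D (X - Z)"
    using \<tau> disj by (auto intro: partial_assignments_mono)
  then have "w (pa_prod (X - Z) \<tau> \<sigma>1) \<le> w (pa_prod (X - Z) \<tau> \<sigma>2)"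
    using disj by (intro subset_monotoneD[OF sm _ \<sigma>]) auto
  moreover have "pa_prod (X - Z) \<tau> \<sigma>i = pa_prod Y \<tau> \<sigma>i"
    if "\<sigma>i \<in> partial_assignments D Z" for \<sigma>i
    using disj by (intro pa_prod_enlarge[OF \<tau> that]) auto
  ultimately show ?thesis
    using \<sigma> by simp
qed

lemma subset_monotone_pa_prod_left:
  assumes sm: "subset_monotone D X w" and disj: "Y \<inter> Z = {}" "Y \<union> Z \<subseteq> X"
    and \<tau>: "\<tau>1 \<in> partial_assignments D Y" "\<tau>2 \<in> partial_assignments D Y" "w \<tau>1 \<le> w \<tau>2"
    and \<sigma>: "\<sigma> \<in> partial_assignments D Z"
  shows "w (pa_prod Y \<tau>1 \<sigma>) \<le> w (pa_prod Y \<tau>2 \<sigma>)"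
proof -
  have "w (pa_prod Z \<sigma> \<tau>1) \<le> w (pa_prod Z \<sigma> \<tau>2)"
    using subset_monotone_pa_prod_right[OF sm _ _ \<sigma> \<tau>] disj by blast
  then show ?thesis
    using pa_prod_commute[OF \<tau>(1) \<sigma>] pa_prod_commute[OF \<tau>(2) \<sigma>] disj(1) by simp
qed

theorem lemmaA1:
  fixes D :: "'d set" and X :: "'x set" and w :: "('x \<Rightarrow> 'd option) \<Rightarrow> real"
  assumes "finite D" and "finite X"
  shows "subset_monotone D X w \<longleftrightarrow>
    (\<forall>Y Z. Y \<inter> Z = {} \<and> Y \<union> Z \<subseteq> X \<longrightarrow>
      (\<forall>\<tau>1\<in>partial_assignments D Y. \<forall>\<tau>2\<in>partial_assignments D Y.
       \<forall>\<sigma>1\<in>partial_assignments D Z. \<forall>\<sigma>2\<in>partial_assignments D Z.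
         w \<tau>1 \<le> w \<tau>2 \<longrightarrow> w \<sigma>1 \<le> w \<sigma>2 \<longrightarrow>
         w (pa_prod Y \<tau>1 \<sigma>1) \<le> w (pa_prod Y \<tau>2 \<sigma>2)))"
    (is "_ \<longleftrightarrow> ?product_monotone")
proof
  assume sm: "subset_monotone D X w"
  show ?product_monotone
  proof (intro allI impI ballI)
    fix Y Z \<tau>1 \<tau>2 \<sigma>1 \<sigma>2
    assume disj: "Y \<inter> Z = {} \<and> Y \<union> Z \<subseteq> X"
      and \<tau>: "\<tau>1 \<in> partial_assignments D Y" "\<tau>2 \<in> partial_assignments D Y"
      and \<sigma>: "\<sigma>1 \<in> partial_assignments D Z" "\<sigma>2 \<in> partial_assignments D Z"
      and "w \<tau>1 \<le> w \<tau>2" "w \<sigma>1 \<le> w \<sigma>2"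
    have "w (pa_prod Y \<tau>1 \<sigma>1) \<le> w (pa_prod Y \<tau>1 \<sigma>2)"
      using subset_monotone_pa_prod_right[OF sm _ _ \<tau>(1) \<sigma> \<open>w \<sigma>1 \<le> w \<sigma>2\<close>] disj by blast
    also have "\<dots> \<le> w (pa_prod Y \<tau>2 \<sigma>2)"
      using subset_monotone_pa_prod_left[OF sm _ _ \<tau> \<open>w \<tau>1 \<le> w \<tau>2\<close> \<sigma>(2)] disj by blast
    finally show "w (pa_prod Y \<tau>1 \<sigma>1) \<le> w (pa_prod Y \<tau>2 \<sigma>2)" .
  qed
next
  assume pm: ?product_monotone
  show "subset_monotone D X w"
    unfolding subset_monotone_def
  proof (intro allI impI ballI)
    fix Y \<tau>1 \<tau>2 \<sigma>
    assume "Y \<subseteq> X" "\<tau>1 \<in> partial_assignments D Y" "\<tau>2 \<in> partial_assignments D Y"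
      and "w \<tau>1 \<le> w \<tau>2" "\<sigma> \<in> partial_assignments D (X - Y)"
    then show "w (pa_prod (X - Y) \<sigma> \<tau>1) \<le> w (pa_prod (X - Y) \<sigma> \<tau>2)"
      using pm[rule_format, of "X - Y" Y \<sigma> \<sigma> \<tau>1 \<tau>2] by blast
  qed
qed

end
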